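(* Let $S$ be a nonempty subset of $\mathbb{N}^\times\setminus\{1\}$, and let $B$ be a unital C*-algebra generated by a family of isometries $\{S_n\}_{n\in S}$ and a unitary $U$ such that for all $n\in S$: $S_nU=U^nS_n$ and $\sum_{i=0}^{n-1}U^iS_nS_n^*U^{-i}=1_B$. Then $S_nS_m=S_mS_n$ for all $n,m\in S$ if and only if for all $n,m\in S$, $$S_n^*S_m=\sum_{\substack{0\le l\le nm-1\\ l\in n\mathbb{Z}\cap m\mathbb{Z}}}U^{l/n}S_mS_n^*U^{-l/m}.$$
   Context: $\mathbb{N}^\times$ denotes the multiplicative semigroup of positive integers. *)

theory Defs
  imports Complex_Main
begin

class scaleC =
  fixes scaleC :: "complex \<Rightarrow> 'a \<Rightarrow> 'a" (infixr "*\<^sub>C" 75)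

class complex_vector = real_vector + scaleC +
  assumes scaleC_add_right: "a *\<^sub>C (x + y) = a *\<^sub>C x + a *\<^sub>C y"
    and scaleC_add_left: "(a + b) *\<^sub>C x = a *\<^sub>C x + b *\<^sub>C x"
    and scaleC_scaleC: "a *\<^sub>C (b *\<^sub>C x) = (a * b) *\<^sub>C x"
    and scaleC_one: "1 *\<^sub>C x = x"
    and scaleR_scaleC: "scaleR r x = complex_of_real r *\<^sub>C x"

text \<open>Unital C*-algebras: complete normed unital complex algebras with an
  involution satisfying the C*-identity.  (The zero algebra is allowed.)\<close>
class cstar_algebra = complex_vector + real_normed_algebra + ring_1 + banach +
  fixes cstar :: "'a \<Rightarrow> 'a"
  assumes norm_scaleC: "norm (a *\<^sub>C x) = cmod a * norm x"
    and scaleC_mult_left: "(a *\<^sub>C x) * y = a *\<^sub>C (x * y)"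
    and scaleC_mult_right: "x * (a *\<^sub>C y) = a *\<^sub>C (x * y)"
    and cstar_cstar: "cstar (cstar x) = x"
    and cstar_add: "cstar (x + y) = cstar x + cstar y"
    and cstar_scaleC: "cstar (a *\<^sub>C x) = cnj a *\<^sub>C cstar x"
    and cstar_mult: "cstar (x * y) = cstar y * cstar x"
    and cstar_identity: "norm (cstar x * x) = norm x ^ 2"

definition isometry :: "'a::cstar_algebra \<Rightarrow> bool" where
  "isometry s \<longleftrightarrow> cstar s * s = 1"

definition unitary :: "'a::cstar_algebra \<Rightarrow> bool" where
  "unitary u \<longleftrightarrow> cstar u * u = 1 \<and> u * cstar u = 1"

definition star_subalgebra :: "'a::cstar_algebra set \<Rightarrow> bool" where
  "star_subalgebra A \<longleftrightarrow> 1 \<in> A \<and>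
     (\<forall>x\<in>A. \<forall>y\<in>A. x + y \<in> A \<and> x * y \<in> A) \<and>
     (\<forall>x\<in>A. \<forall>a. a *\<^sub>C x \<in> A) \<and> (\<forall>x\<in>A. cstar x \<in> A)"

definition cstar_generated_by :: "'a::cstar_algebra set \<Rightarrow> bool" where
  "cstar_generated_by G \<longleftrightarrow>
     (\<forall>A. closed A \<and> star_subalgebra A \<and> G \<subseteq> A \<longrightarrow> A = UNIV)"

end

theory Submission
  imports Defs
begin

text \<open>The range projections \<open>U\<^sup>i S\<^sub>n S\<^sub>n\<^sup>* U\<^sup>-\<^sup>i\<close>, \<open>i < n\<close>, sum to 1, hence are mutually
  orthogonal, and so \<open>S\<^sub>n\<^sup>* U\<^sup>j S\<^sub>n\<close> is \<open>U\<^bsup>j/n\<^esup>\<close> when \<open>n\<close> divides \<open>j\<close> and 0 otherwise.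
  If \<open>S\<^sub>n\<close> and \<open>S\<^sub>m\<close> commute, inserting this partition of unity into \<open>S\<^sub>n\<^sup>* S\<^sub>m\<close> and moving
  \<open>S\<^sub>m\<close> past \<open>U\<^sup>i\<close> leaves exactly the terms with \<open>n | mi\<close>, i.e. the common multiples \<open>l = mi < nm\<close>.
  Conversely the formula gives \<open>(S\<^sub>n S\<^sub>m)\<^sup>* (S\<^sub>m S\<^sub>n) = 1\<close>, and two isometries with this property
  coincide.

  Orthogonality of projections summing to 1 is derived without spectral theory: a self-adjoint
  \<open>h\<close> with \<open>\<parallel>1 \<plusminus> h\<parallel> \<le> 1\<close> vanishes, by a discrete Cauchy estimate for the polynomial \<open>(1 + z h)\<^sup>M\<close>
  on the disc \<open>|z| \<le> 1/2\<close>.\<close>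

lemma cstar_one: "cstar (1::'a::cstar_algebra) = 1"
  using cstar_mult[of "cstar (1::'a)" 1] by (simp add: cstar_cstar)

lemma cstar_zero: "cstar (0::'a::cstar_algebra) = 0"
  using cstar_add[of "0::'a" 0] by simp

lemma cstar_minus: "cstar (- x) = - cstar (x::'a::cstar_algebra)"
  using cstar_add[of "-x" x] by (simp add: cstar_zero eq_neg_iff_add_eq_0)

lemma cstar_diff: "cstar (x - y) = cstar x - cstar (y::'a::cstar_algebra)"
  using cstar_add[of x "-y"] by (simp add: cstar_minus)

lemma cstar_power: "cstar (x ^ n) = cstar (x::'a::cstar_algebra) ^ n"
  by (induct n) (auto simp: cstar_one cstar_mult power_commutes)

lemma cstar_scaleR: "cstar (r *\<^sub>R x) = r *\<^sub>R cstar (x::'a::cstar_algebra)"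
  by (simp add: scaleR_scaleC cstar_scaleC)

lemma scaleC_zero_right: "a *\<^sub>C (0::'a::complex_vector) = 0"
  using scaleC_add_right[of a "0::'a" 0] by simp

lemma scaleC_zero_left: "0 *\<^sub>C (x::'a::complex_vector) = 0"
  using scaleC_add_left[of 0 0 x] by simp

lemma scaleC_minus_left: "(- a) *\<^sub>C x = - (a *\<^sub>C (x::'a::complex_vector))"
  using scaleC_add_left[of a "-a" x] by (simp add: scaleC_zero_left eq_neg_iff_add_eq_0 add.commute)

lemma scaleC_sum_right: "a *\<^sub>C (\<Sum>i\<in>A. f i) = (\<Sum>i\<in>A. a *\<^sub>C (f i::'a::complex_vector))"
  by (induct A rule: infinite_finite_induct) (auto simp: scaleC_zero_right scaleC_add_right)

lemma scaleC_sum_left: "(\<Sum>i\<in>A. f i) *\<^sub>C x = (\<Sum>i\<in>A. f i *\<^sub>C (x::'a::complex_vector))"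
  by (induct A rule: infinite_finite_induct) (auto simp: scaleC_zero_left scaleC_add_left)

lemma scaleC_of_real: "complex_of_real r *\<^sub>C x = r *\<^sub>R (x::'a::complex_vector)"
  by (simp add: scaleR_scaleC)

lemma power_scaleC: "(c *\<^sub>C x) ^ k = c ^ k *\<^sub>C (x::'a::cstar_algebra) ^ k"
  by (induct k) (auto simp: scaleC_one scaleC_mult_left scaleC_mult_right scaleC_scaleC mult.commute)

lemma of_nat_mult_eq_scaleC: "of_nat m * x = (of_nat m::complex) *\<^sub>C (x::'a::cstar_algebra)"
  by (induct m) (auto simp: scaleC_zero_left scaleC_add_left scaleC_one algebra_simps)

lemma of_nat_eq_scaleR_one: "(of_nat n :: 'a::cstar_algebra) = real n *\<^sub>R 1"
  by (induct n) (simp_all add: scaleR_add_left)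

lemma norm_selfadjoint_mult_self: "cstar h = h \<Longrightarrow> norm (h * h) = norm (h::'a::cstar_algebra) ^ 2"
  using cstar_identity[of h] by simp

lemma norm_selfadjoint_power_pow2:
  "cstar h = h \<Longrightarrow> norm (h ^ (2 ^ k)) = norm (h::'a::cstar_algebra) ^ (2 ^ k)"
proof (induct k)
  case 0 then show ?case by simp
next
  case (Suc k)
  have "cstar (h ^ (2^k)) = h ^ (2^k)" using Suc by (simp add: cstar_power)
  moreover have "h ^ (2 ^ Suc k) = h ^ (2^k) * h ^ (2^k)" by (simp add: power_add[symmetric] mult_2)
  ultimately have "norm (h ^ (2 ^ Suc k)) = norm (h ^ (2^k)) ^ 2"
    using norm_selfadjoint_mult_self by metis
  also have "\<dots> = norm h ^ (2 ^ Suc k)" using Suc by (simp add: power_mult[symmetric] mult.commute)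
  finally show ?case .
qed

definition projection :: "'a::cstar_algebra \<Rightarrow> bool" where
  "projection e \<longleftrightarrow> cstar e = e \<and> e * e = e"

lemma projection_one_minus: "projection e \<Longrightarrow> projection (1 - e)"
  by (simp add: projection_def cstar_diff cstar_one algebra_simps)

lemma norm_projection_le_1: "projection e \<Longrightarrow> norm (e::'a::cstar_algebra) \<le> 1"
  using norm_selfadjoint_mult_self[of e]
  by (auto simp: projection_def power2_eq_square mult_le_cancel_left1)

lemma norm_one_le_1: "norm (1::'a::cstar_algebra) \<le> 1"
  by (rule norm_projection_le_1) (simp add: projection_def cstar_one)

lemma norm_power_le_power: "norm (x ^ n) \<le> norm (x::'a::cstar_algebra) ^ n"
proof (induct n)
  case 0 then show ?case using norm_one_le_1 by simp
next
  case (Suc n)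
  have "norm (x ^ Suc n) \<le> norm x * norm (x ^ n)" by (simp add: norm_mult_ineq)
  also have "\<dots> \<le> norm x * norm x ^ n" using Suc by (simp add: mult_left_mono)
  finally show ?case by simp
qed

lemma projection_mult_eq_0_if_corner_eq_0:
  fixes e p :: "'a::cstar_algebra"
  assumes e: "projection e" and p: "projection p" and epe: "e * p * e = 0"
  shows "e * p = 0"
proof -
  have adj: "cstar (p * e) = e * p" using e p by (simp add: projection_def cstar_mult)
  have "e * p * (p * e) = e * p * e" using p by (metis projection_def mult.assoc)
  then have "norm (p * e) ^ 2 = 0" using epe cstar_identity[of "p * e"] by (simp add: adj)
  then show ?thesis using adj by (simp add: cstar_zero)
qed

section \<open>Norms of block-diagonal elements\<close>

lemma real_le_if_pow2_powers_le_twice: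
  fixes x y :: real
  assumes "0 \<le> x" "0 \<le> y" "\<And>k. x ^ (2 ^ k) \<le> 2 * y ^ (2 ^ k)"
  shows "x \<le> y"
proof (rule ccontr)
  assume "\<not> x \<le> y"
  then have xy: "y < x" by simp
  show False
  proof (cases "y = 0")
    case True
    then show False using assms(3)[of 0] xy by simp
  next
    case False
    then have yp: "0 < y" using assms by simp
    define r where "r = x / y"
    have r1: "1 < r" using xy yp by (simp add: r_def)
    obtain k where k: "1 / (r - 1) < real k" using reals_Archimedean2 by blast
    have "1 < real k * (r - 1)" using k r1 by (simp add: divide_less_eq)
    also have "\<dots> < 2 ^ k * (r - 1)"
      using r1 less_exp[of k] by (intro mult_strict_right_mono) (simp_all flip: of_nat_less_iff)
    also have "1 + 2 ^ k * (r - 1) \<le> (1 + (r - 1)) ^ (2^k)"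
      using Bernoulli_inequality[of "r - 1" "2 ^ k"] r1 by simp
    finally have "2 < r ^ (2^k)" by simp
    then have "2 * y ^ (2^k) < x ^ (2^k)" using yp by (simp add: r_def power_divide less_divide_eq)
    then show False using assms(3)[of k] by simp
  qed
qed

lemma corner_sum_power:
  fixes e c :: "'a::cstar_algebra"
  assumes "e * e = e"
  shows "(a *\<^sub>R (1 - e) + e * c * e) ^ Suc N = (a ^ Suc N) *\<^sub>R (1 - e) + (e * c * e) ^ Suc N"
proof (induct N)
  case 0 then show ?case by simp
next
  case (Suc N)
  have fe: "(1 - e) * e = 0" "e * (1 - e) = 0" "(1 - e) * (1 - e) = 1 - e"
    using assms by (simp_all add: algebra_simps)
  have D1: "(1 - e) * (e * c * e) ^ Suc N = 0"
    by (simp add: mult.assoc[symmetric] fe)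
  have D2: "(e * c * e) * (1 - e) = 0"
    by (simp add: mult.assoc fe)
  have "(a *\<^sub>R (1 - e) + e * c * e) ^ Suc (Suc N) =
      (a *\<^sub>R (1 - e) + e * c * e) * ((a ^ Suc N) *\<^sub>R (1 - e) + (e * c * e) ^ Suc N)"
    using Suc by (simp only: power_Suc[of _ "Suc N"])
  also have "\<dots> = (a * a ^ Suc N) *\<^sub>R ((1 - e) * (1 - e)) + a *\<^sub>R ((1 - e) * (e * c * e) ^ Suc N)
      + (a ^ Suc N) *\<^sub>R ((e * c * e) * (1 - e)) + (e * c * e) * (e * c * e) ^ Suc N"
    by (simp add: algebra_simps)
  also have "\<dots> = (a ^ Suc (Suc N)) *\<^sub>R (1 - e) + (e * c * e) ^ Suc (Suc N)"
    by (simp only: D1 D2 fe) simp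
  finally show ?case .
qed

text \<open>The powers of this self-adjoint element stay block diagonal, so its \<open>2\<^sup>k\<close>-th powers have norm
  at most \<open>2 M\<^bsup>2\<^sup>k\<^esup>\<close> with \<open>M = max |a| \<parallel>c\<parallel>\<close>; the C*-identity turns this into the bound \<open>M\<close>.\<close>
lemma norm_corner_sum_le:
  fixes e c :: "'a::cstar_algebra"
  assumes e: "projection e" and c: "cstar c = c"
  shows "norm (a *\<^sub>R (1 - e) + e * c * e) \<le> max \<bar>a\<bar> (norm c)"
proof -
  define z where "z = a *\<^sub>R (1 - e) + e * c * e"
  define M where "M = max \<bar>a\<bar> (norm c)"
  have z_sa: "cstar z = z" using e c unfolding z_def
    by (simp add: projection_def cstar_add cstar_scaleR cstar_diff cstar_one cstar_mult mult.assoc)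
  have ne: "norm e \<le> 1" and nf: "norm (1 - e) \<le> 1"
    using e by (simp_all add: norm_projection_le_1 projection_one_minus)
  have nD: "norm (e * c * e) \<le> norm c"
  proof -
    have "norm (e * c * e) \<le> norm e * norm c * norm e"
      by (meson norm_mult_ineq order_trans mult_right_mono norm_ge_zero)
    also have "\<dots> \<le> 1 * norm c * 1" using ne by (intro mult_mono) (auto intro: mult_le_one)
    finally show ?thesis by simp
  qed
  have bound: "norm (z ^ Suc N) \<le> 2 * M ^ Suc N" for N
  proof -
    have "norm (z ^ Suc N) \<le> norm ((a ^ Suc N) *\<^sub>R (1 - e)) + norm ((e * c * e) ^ Suc N)"
      using e unfolding z_def projection_def by (simp only: corner_sum_power norm_triangle_ineq)
    also have "\<dots> \<le> \<bar>a\<bar> ^ Suc N + norm c ^ Suc N"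
    proof (rule add_mono)
      show "norm ((a ^ Suc N) *\<^sub>R (1 - e)) \<le> \<bar>a\<bar> ^ Suc N"
        using nf by (simp only: norm_scaleR power_abs[symmetric]) (simp add: mult_left_le)
      have "norm ((e * c * e) ^ Suc N) \<le> norm (e * c * e) ^ Suc N" by (rule norm_power_le_power)
      also have "\<dots> \<le> norm c ^ Suc N" using nD by (intro power_mono) simp_all
      finally show "norm ((e * c * e) ^ Suc N) \<le> norm c ^ Suc N" .
    qed
    also have "\<dots> \<le> M ^ Suc N + M ^ Suc N" by (intro add_mono power_mono) (auto simp: M_def)
    finally show ?thesis by simp
  qed
  have "norm z \<le> M"
  proof (rule real_le_if_pow2_powers_le_twice)
    fix k :: nat
    obtain N where N: "(2::nat) ^ k = Suc N" using not0_implies_Suc by force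
    show "norm z ^ (2 ^ k) \<le> 2 * M ^ (2 ^ k)"
      using norm_selfadjoint_power_pow2[OF z_sa, of k] bound[of N] N by simp
  qed (simp_all add: M_def)
  then show ?thesis by (simp add: z_def M_def)
qed

lemma norm_scalar_minus_corner_le:
  fixes e p :: "'a::cstar_algebra"
  assumes e: "projection e" and p: "projection p" and t: "1 \<le> t"
  shows "norm (t *\<^sub>R 1 - e * p * e) \<le> t"
proof -
  define w where "w = t *\<^sub>R 1 - p"
  have w_sa: "cstar w = w" using p by (simp add: w_def projection_def cstar_diff cstar_scaleR cstar_one)
  have "w = t *\<^sub>R (1 - p) + p * ((t - 1) *\<^sub>R 1) * p"
    using p by (simp add: w_def projection_def algebra_simps)
  moreover have "cstar ((t - 1) *\<^sub>R 1) = (t - 1) *\<^sub>R (1::'a)"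
    by (simp add: cstar_scaleR cstar_one)
  ultimately have "norm w \<le> max \<bar>t\<bar> (norm ((t - 1) *\<^sub>R (1::'a)))"
    using norm_corner_sum_le[OF p] by presburger
  also have "\<dots> \<le> t"
    using mult_left_mono[OF norm_one_le_1[where 'a='a], of "t - 1"] t by simp
  finally have "norm w \<le> t" .
  moreover have "t *\<^sub>R 1 - e * p * e = t *\<^sub>R (1 - e) + e * w * e"
    using e by (simp add: w_def projection_def algebra_simps)
  ultimately show ?thesis using norm_corner_sum_le[OF e w_sa, of t] t by simp
qed

section \<open>Self-adjoint elements with \<open>\<parallel>1 \<plusminus> h\<parallel> \<le> 1\<close> vanish\<close>

lemma norm_one_plus_scaleR_le_1:
  fixes x :: "'a::cstar_algebra"
  assumes "norm (1 + x) \<le> 1" "norm (1 - x) \<le> 1" "\<bar>a\<bar> \<le> 1"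
  shows "norm (1 + a *\<^sub>R x) \<le> 1"
proof -
  have "((1 + a) / 2) *\<^sub>R (1 + x) + ((1 - a) / 2) *\<^sub>R (1 - x)
      = ((1 + a) / 2 + (1 - a) / 2) *\<^sub>R 1 + ((1 + a) / 2 - (1 - a) / 2) *\<^sub>R x"
    by (simp only: scaleR_add_right scaleR_diff_right scaleR_add_left scaleR_diff_left) simp
  also have "\<dots> = 1 + a *\<^sub>R x" by (simp add: field_simps)
  finally have "norm (1 + a *\<^sub>R x)
      \<le> norm (((1 + a) / 2) *\<^sub>R (1 + x)) + norm (((1 - a) / 2) *\<^sub>R (1 - x))"
    by (metis norm_triangle_ineq)
  also have "\<dots> \<le> (1 + a) / 2 * 1 + (1 - a) / 2 * 1"
    using assms by (intro add_mono) (auto simp: mult_left_le)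
  finally show ?thesis by argo
qed

lemma norm_one_plus_square_le_1:
  fixes h :: "'a::cstar_algebra"
  assumes h: "cstar h = h" "norm (1 + h) \<le> 1" "norm (1 - h) \<le> 1"
  shows "norm (1 + h * h) \<le> 1"
proof -
  have sa: "cstar (1 + h) = 1 + h" "cstar (1 - h) = 1 - h"
    using h by (simp_all add: cstar_add cstar_diff cstar_one)
  have "(1 + h) * (1 + h) + (1 - h) * (1 - h) = 2 *\<^sub>R (1 + h * h)"
    by (simp add: algebra_simps scaleR_2)
  then have "2 * norm (1 + h * h) = norm ((1 + h) * (1 + h) + (1 - h) * (1 - h))"
    by simp
  also have "\<dots> \<le> norm ((1 + h) * (1 + h)) + norm ((1 - h) * (1 - h))"
    by (rule norm_triangle_ineq)
  also have "\<dots> = norm (1 + h) ^ 2 + norm (1 - h) ^ 2"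
    by (simp add: norm_selfadjoint_mult_self[OF sa(1)] norm_selfadjoint_mult_self[OF sa(2)])
  also have "\<dots> \<le> 1 + 1" using h by (intro add_mono) (simp_all add: power_le_one)
  finally show ?thesis by simp
qed

lemma norm_one_plus_imaginary_le_1:
  fixes h :: "'a::cstar_algebra"
  assumes h: "cstar h = h" "norm (1 + h) \<le> 1" "norm (1 - h) \<le> 1"
    and c: "c = \<i> \<or> c = - \<i>"
  shows "norm (1 + c *\<^sub>C h) \<le> 1"
proof -
  have "cstar (1 + c *\<^sub>C h) * (1 + c *\<^sub>C h) = (1 - c *\<^sub>C h) * (1 + c *\<^sub>C h)"
    using c h by (auto simp: cstar_add cstar_one cstar_scaleC scaleC_minus_left)
  also have "\<dots> = 1 - c *\<^sub>C h * (c *\<^sub>C h)"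
    by (simp add: algebra_simps)
  also have "c *\<^sub>C h * (c *\<^sub>C h) = - (h * h)"
    using c by (auto simp: scaleC_mult_left scaleC_mult_right scaleC_scaleC scaleC_minus_left scaleC_one)
  finally have "norm (1 + c *\<^sub>C h) ^ 2 \<le> 1"
    using norm_one_plus_square_le_1[OF h] cstar_identity[of "1 + c *\<^sub>C h"] by simp
  then show ?thesis by (simp add: power_le_one_iff)
qed

lemma norm_one_plus_scaleC_le_1:
  fixes h :: "'a::cstar_algebra"
  assumes h: "cstar h = h" "norm (1 + h) \<le> 1" "norm (1 - h) \<le> 1"
    and z: "cmod z \<le> 1/2"
  shows "norm (1 + z *\<^sub>C h) \<le> 1"
proof -
  define g where "g = \<i> *\<^sub>C h"
  have g: "norm (1 + g) \<le> 1" "norm (1 - g) \<le> 1"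
    using norm_one_plus_imaginary_le_1[OF h, of "\<i>"] norm_one_plus_imaginary_le_1[OF h, of "-\<i>"]
    by (simp_all add: g_def scaleC_minus_left)
  have "complex_of_real (Re z) + complex_of_real (Im z) * \<i> = z"
    by (simp add: complex_eq_iff)
  then have "z *\<^sub>C h = (complex_of_real (Re z) + complex_of_real (Im z) * \<i>) *\<^sub>C h"
    by simp
  then have zh: "z *\<^sub>C h = Re z *\<^sub>R h + Im z *\<^sub>R g"
    by (simp add: scaleC_add_left scaleC_scaleC[symmetric] scaleC_of_real g_def)
  have "\<bar>2 * Re z\<bar> \<le> 1" "\<bar>2 * Im z\<bar> \<le> 1"
    using abs_Re_le_cmod[of z] abs_Im_le_cmod[of z] z by simp_all
  then have n: "norm (1 + (2 * Re z) *\<^sub>R h) \<le> 1" "norm (1 + (2 * Im z) *\<^sub>R g) \<le> 1"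
    using norm_one_plus_scaleR_le_1 h g by blast+
  have "1 + z *\<^sub>C h = (1/2) *\<^sub>R (1 + (2 * Re z) *\<^sub>R h) + (1/2) *\<^sub>R (1 + (2 * Im z) *\<^sub>R g)"
    by (simp add: zh algebra_simps scaleR_add_left[symmetric])
  then have "norm (1 + z *\<^sub>C h) \<le> (1/2) * norm (1 + (2 * Re z) *\<^sub>R h) + (1/2) * norm (1 + (2 * Im z) *\<^sub>R g)"
    by (simp only:) (rule order_trans[OF norm_triangle_ineq], simp)
  then show ?thesis using n by simp
qed

lemma one_plus_power_binomial: "(1 + x::'a::ring_1) ^ n = (\<Sum>k\<le>n. of_nat (n choose k) * x ^ k)"
proof (induct n)
  case 0 then show ?case by simp
next
  case (Suc n)
  have "(1 + x) ^ Suc n = (\<Sum>k\<le>n. of_nat (n choose k) * x ^ k) * (1 + x)"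
    by (simp only: power_Suc2 Suc)
  also have "\<dots> = (\<Sum>k\<le>n. of_nat (n choose k) * x ^ k) + (\<Sum>k\<le>n. of_nat (n choose k) * x ^ Suc k)"
    by (simp add: distrib_left sum_distrib_right mult.assoc power_commutes)
  also have "(\<Sum>k\<le>n. of_nat (n choose k) * x ^ k) = 1 + (\<Sum>k\<le>n. of_nat (n choose Suc k) * x ^ Suc k)"
  proof -
    have "(\<Sum>k\<le>Suc n. of_nat (n choose k) * x ^ k) = (\<Sum>k\<le>n. of_nat (n choose k) * x ^ k)"
      by (simp add: binomial_eq_0)
    moreover have "(\<Sum>k\<le>Suc n. of_nat (n choose k) * x ^ k)
        = 1 + (\<Sum>k\<le>n. of_nat (n choose Suc k) * x ^ Suc k)"
      by (subst sum.atMost_Suc_shift) simp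
    ultimately show ?thesis by simp
  qed
  also have "1 + (\<Sum>k\<le>n. of_nat (n choose Suc k) * x ^ Suc k) + (\<Sum>k\<le>n. of_nat (n choose k) * x ^ Suc k)
      = (\<Sum>k\<le>Suc n. of_nat (Suc n choose k) * x ^ k)"
    by (subst sum.atMost_Suc_shift) (simp add: sum.distrib distrib_right add.assoc add.commute)
  finally show ?case .
qed

lemma one_plus_scaleC_power_binomial:
  "(1 + c *\<^sub>C h::'a::cstar_algebra) ^ n = (\<Sum>k\<le>n. (of_nat (n choose k) * c ^ k) *\<^sub>C h ^ k)"
  by (simp add: one_plus_power_binomial power_scaleC of_nat_mult_eq_scaleC scaleC_mult_right
      scaleC_scaleC mult.commute)

lemma sum_cis_multiples_eq_0:
  assumes "0 < N" "m \<noteq> 0" "\<bar>m\<bar> < int N"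
  shows "(\<Sum>j<N. cis (real j * (of_int m * (2 * pi / real N)))) = 0"
proof -
  define x where "x = cis (of_int m * (2 * pi / real N))"
  have "x ^ N = cis (2 * pi * of_int m)" unfolding x_def DeMoivre using assms(1)
    by (simp add: field_simps)
  then have xN: "x ^ N = 1" by (simp add: cis_multiple_2pi)
  have x1: "x \<noteq> 1"
  proof
    assume "x = 1"
    then have "cos (of_int m * (2 * pi / real N)) = 1" unfolding x_def
      by (metis cis.simps(1) one_complex.simps(1))
    then obtain n :: int where "of_int m * (2 * pi / real N) = of_int n * 2 * pi"
      using cos_one_2pi_int by blast
    then have "real_of_int m = real_of_int n * real N" using assms(1) by (simp add: field_simps)
    then have "m = n * int N" by (metis of_int_eq_iff of_int_mult of_int_of_nat_eq)
    then show False using assms(2,3) by (auto simp: abs_mult)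
  qed
  have "(\<Sum>j<N. cis (real j * (of_int m * (2 * pi / real N)))) = (\<Sum>j<N. x ^ j)"
    unfolding x_def DeMoivre ..
  also have "\<dots> = 0" using geometric_sum[OF x1, of N] xN by simp
  finally show ?thesis .
qed

lemma sum_cis_extract_linear_coefficient:
  assumes "k < N" "2 \<le> N" "t = 2 * pi / real N"
  shows "(\<Sum>j<N. cis (- (real j * t)) * (b * (c * cis (real j * t)) ^ k))
    = (if k = 1 then b * c * of_nat N else 0)"
proof -
  have summand: "cis (- (real j * t)) * (b * (c * cis (real j * t)) ^ k)
      = b * c ^ k * cis (real j * (of_int (int k - 1) * t))" for j
  proof -
    have "cis (- (real j * t)) * cis (real j * t) ^ k = cis (real j * (of_int (int k - 1) * t))"
      by (simp add: DeMoivre cis_mult algebra_simps)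
    then show ?thesis by (simp add: power_mult_distrib algebra_simps)
  qed
  have "(\<Sum>j<N. cis (- (real j * t)) * (b * (c * cis (real j * t)) ^ k))
      = b * c ^ k * (\<Sum>j<N. cis (real j * (of_int (int k - 1) * t)))"
    by (simp only: summand sum_distrib_left)
  also have "\<dots> = (if k = 1 then b * c * of_nat N else 0)"
  proof (cases "k = 1")
    case False
    have "(\<Sum>j<N. cis (real j * (of_int (int k - 1) * t))) = 0"
      unfolding assms(3) by (rule sum_cis_multiples_eq_0) (use assms False in auto)
    then show ?thesis using False by simp
  qed simp
  finally show ?thesis .
qed

lemma sum_roots_of_unity_one_plus_scaleC_power:
  fixes h :: "'a::cstar_algebra"
  assumes M: "1 \<le> M" "M < N" and t: "t = 2 * pi / real N"
  shows "(\<Sum>j<N. cis (- (real j * t)) *\<^sub>C (1 + (c * cis (real j * t)) *\<^sub>C h) ^ M)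
    = (of_nat M * c * of_nat N) *\<^sub>C h"
proof -
  have "(\<Sum>j<N. cis (- (real j * t)) *\<^sub>C (1 + (c * cis (real j * t)) *\<^sub>C h) ^ M)
      = (\<Sum>j<N. \<Sum>k\<le>M. (cis (- (real j * t)) * (of_nat (M choose k) * (c * cis (real j * t)) ^ k)) *\<^sub>C h ^ k)"
    unfolding one_plus_scaleC_power_binomial by (simp add: scaleC_sum_right scaleC_scaleC)
  also have "\<dots> = (\<Sum>k\<le>M. \<Sum>j<N.
      (cis (- (real j * t)) * (of_nat (M choose k) * (c * cis (real j * t)) ^ k)) *\<^sub>C h ^ k)"
    by (rule sum.swap)
  also have "\<dots> = (\<Sum>k\<le>M. (if k = 1 then of_nat M * c * of_nat N else 0) *\<^sub>C h ^ k)"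
  proof (rule sum.cong)
    fix k assume "k \<in> {..M}"
    then have "k < N" "2 \<le> N" using M by auto
    then show "(\<Sum>j<N. (cis (- (real j * t)) * (of_nat (M choose k) * (c * cis (real j * t)) ^ k))
        *\<^sub>C h ^ k) = (if k = 1 then of_nat M * c * of_nat N else 0) *\<^sub>C h ^ k"
      using sum_cis_extract_linear_coefficient[OF _ _ t, of k "of_nat (M choose k)" c]
      by (simp add: scaleC_sum_left[symmetric])
  qed simp
  also have "\<dots> = (\<Sum>k\<in>{1}. (if k = 1 then of_nat M * c * of_nat N else 0) *\<^sub>C h ^ k)"
    by (rule sum.mono_neutral_right) (use M in \<open>auto simp: scaleC_zero_left\<close>)
  finally show ?thesis by simp
qed

text \<open>A discrete Cauchy estimate: the root-of-unity average of the previous lemma, taken with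
  \<open>c = 1/2\<close>, has norm \<open>(M+1) M \<parallel>h\<parallel>/2\<close>, while each of its \<open>M+1\<close> summands has norm at most 1.\<close>
lemma norm_selfadjoint_le_if_norm_one_pm_le_1:
  fixes h :: "'a::cstar_algebra"
  assumes h: "cstar h = h" "norm (1 + h) \<le> 1" "norm (1 - h) \<le> 1" and M: "1 \<le> M"
  shows "real M * norm h \<le> 2"
proof -
  define N where "N = Suc M"
  define t where "t = 2 * pi / real N"
  define X where "X = (\<Sum>j<N. cis (- (real j * t)) *\<^sub>C (1 + (1/2 * cis (real j * t)) *\<^sub>C h) ^ M)"
  have "norm X \<le> (\<Sum>j<N. norm (cis (- (real j * t)) *\<^sub>C (1 + (1/2 * cis (real j * t)) *\<^sub>C h) ^ M))"
    unfolding X_def by (rule norm_sum)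
  also have "\<dots> \<le> (\<Sum>j<N. 1)"
  proof (rule sum_mono)
    fix j
    have "norm (1 + (1/2 * cis (real j * t)) *\<^sub>C h) \<le> 1"
      by (rule norm_one_plus_scaleC_le_1[OF h]) (simp add: norm_mult)
    then have "norm ((1 + (1/2 * cis (real j * t)) *\<^sub>C h) ^ M) \<le> 1"
      by (meson norm_power_le_power order_trans power_le_one norm_ge_zero)
    then show "norm (cis (- (real j * t)) *\<^sub>C (1 + (1/2 * cis (real j * t)) *\<^sub>C h) ^ M) \<le> 1"
      by (simp add: norm_scaleC)
  qed
  finally have "norm X \<le> real N" by simp
  moreover have "X = (of_nat M * (1/2) * of_nat N) *\<^sub>C h"
    unfolding X_def using M by (intro sum_roots_of_unity_one_plus_scaleC_power) (simp_all add: N_def t_def)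
  ultimately have "real N * (real M * norm h) \<le> real N * 2"
    by (simp add: norm_scaleC norm_mult algebra_simps)
  moreover have "0 < real N" by (simp add: N_def)
  ultimately show ?thesis using mult_le_cancel_left_pos by blast
qed

lemma selfadjoint_eq_0_if_norm_one_pm_le_1:
  fixes h :: "'a::cstar_algebra"
  assumes "cstar h = h" "norm (1 + h) \<le> 1" "norm (1 - h) \<le> 1"
  shows "h = 0"
proof (rule ccontr)
  assume "h \<noteq> 0"
  then have p: "0 < norm h" by simp
  obtain M :: nat where M: "2 / norm h < real M" using reals_Archimedean2 by blast
  moreover have "0 < 2 / norm h" using p by simp
  ultimately have "1 \<le> M" by linarith
  then have "real M * norm h \<le> 2" using norm_selfadjoint_le_if_norm_one_pm_le_1 assms by blast
  with M p show False by (simp add: divide_less_eq mult.commute)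
qed

section \<open>Projections summing to the identity are orthogonal\<close>

lemma selfadjoint_eq_0_if_norm_scalar_pm_le:
  fixes q :: "'a::cstar_algebra"
  assumes "cstar q = q" "norm (T *\<^sub>R 1 + q) \<le> T" "norm (T *\<^sub>R 1 - q) \<le> T" "0 < T"
  shows "q = 0"
proof -
  define h where "h = (1 / T) *\<^sub>R q"
  have "1 + h = (1 / T) *\<^sub>R (T *\<^sub>R 1 + q)" "1 - h = (1 / T) *\<^sub>R (T *\<^sub>R 1 - q)"
    using assms(4) by (simp_all add: h_def scaleR_add_right scaleR_diff_right)
  then have "norm (1 + h) \<le> 1" "norm (1 - h) \<le> 1"
    using assms(2-4) by (simp_all add: divide_le_eq)
  moreover have "cstar h = h" using assms(1) by (simp add: h_def cstar_scaleR)
  ultimately have "h = 0" using selfadjoint_eq_0_if_norm_one_pm_le_1 by blast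
  then show ?thesis using assms(4) by (simp add: h_def)
qed

text \<open>The left-hand element equals \<open>1 + \<Sum>\<^sub>k\<^sub>\<in>\<^sub>K\<^sub>-\<^sub>{\<^sub>b\<^sub>} (1 - e (p k) e)\<close>, a sum of \<open>card K\<close> terms of
  norm at most 1.\<close>
lemma norm_card_plus_corner_le:
  fixes p :: "'i \<Rightarrow> 'a::cstar_algebra"
  assumes fin: "finite K" and b: "b \<in> K" and e: "projection e"
    and proj: "\<And>k. k \<in> K \<Longrightarrow> projection (p k)" and sum: "(\<Sum>k\<in>K. e * p k * e) = 0"
  shows "norm (real (card K) *\<^sub>R 1 + e * p b * e) \<le> real (card K)"
proof -
  define q where "q k = e * p k * e" for k
  have card_K: "card (K - {b}) + 1 = card K"
    using fin b by (simp add: card_Diff_singleton) (metis Suc_pred card_gt_0_iff empty_iff Suc_eq_plus1)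
  have sum_rest: "(\<Sum>k\<in>K - {b}. q k) = - q b"
    using sum.remove[OF fin b, of q] sum by (simp add: q_def eq_neg_iff_add_eq_0 add.commute)
  have "(of_nat (card K)::'a) = of_nat (card (K - {b})) + 1"
    using card_K by (metis of_nat_add of_nat_1)
  then have eq: "real (card K) *\<^sub>R 1 + q b = 1 + (\<Sum>k\<in>K - {b}. (1 - q k))"
    by (simp add: sum_subtractf sum_rest of_nat_eq_scaleR_one[symmetric])
  have "norm (real (card K) *\<^sub>R 1 + q b) \<le> norm (1::'a) + (\<Sum>k\<in>K - {b}. norm (1 - q k))"
    unfolding eq by (rule order_trans[OF norm_triangle_ineq add_left_mono[OF norm_sum]])
  also have "\<dots> \<le> 1 + (\<Sum>k\<in>K - {b}. 1)"
  proof (intro add_mono sum_mono norm_one_le_1)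
    fix k assume "k \<in> K - {b}"
    then show "norm (1 - q k) \<le> 1"
      using norm_scalar_minus_corner_le[OF e proj, of k 1] by (simp add: q_def)
  qed
  also have "\<dots> = real (card K)" using card_K by simp
  finally show ?thesis by (simp add: q_def)
qed

lemma projections_sum_one_orthogonal:
  fixes p :: "'i \<Rightarrow> 'a::cstar_algebra"
  assumes fin: "finite I" and proj: "\<And>i. i \<in> I \<Longrightarrow> projection (p i)"
    and sum: "(\<Sum>i\<in>I. p i) = 1" and a: "a \<in> I" and b: "b \<in> I" and ab: "a \<noteq> b"
  shows "p a * p b = 0"
proof -
  define e where "e = p a"
  define K where "K = I - {a}"
  define T where "T = real (card K)"
  have e: "projection e" using proj a by (simp add: e_def)
  have bK: "b \<in> K" and finK: "finite K" using b ab fin by (simp_all add: K_def)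
  then have T1: "1 \<le> T" by (simp add: T_def Suc_le_eq card_gt_0_iff) blast
  have "(\<Sum>k\<in>K. p k) = 1 - e"
    using sum.remove[OF fin a, of p] sum by (simp add: K_def e_def algebra_simps)
  moreover have "(\<Sum>k\<in>K. e * p k * e) = e * (\<Sum>k\<in>K. p k) * e"
    by (simp add: sum_distrib_left sum_distrib_right)
  ultimately have "(\<Sum>k\<in>K. e * p k * e) = e * (1 - e) * e" by simp
  then have "(\<Sum>k\<in>K. e * p k * e) = 0" using e by (simp add: projection_def algebra_simps)
  then have "norm (T *\<^sub>R 1 + e * p b * e) \<le> T"
    unfolding T_def using norm_card_plus_corner_le[OF finK bK e] proj by (simp add: K_def)
  moreover have "norm (T *\<^sub>R 1 - e * p b * e) \<le> T"
    using norm_scalar_minus_corner_le[OF e proj[OF b] T1] .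
  moreover have "cstar (e * p b * e) = e * p b * e"
    using e proj[OF b] by (simp add: projection_def cstar_mult mult.assoc)
  ultimately have "e * p b * e = 0" using T1 selfadjoint_eq_0_if_norm_scalar_pm_le by fastforce
  then show ?thesis
    using projection_mult_eq_0_if_corner_eq_0[OF e proj[OF b]] by (simp add: e_def)
qed

section \<open>The relations between the isometries and the unitary\<close>

lemma cstar_power_mult_power: "cstar u * u = 1 \<Longrightarrow> cstar u ^ i * u ^ i = (1::'a::cstar_algebra)"
proof (induct i)
  case (Suc i)
  have "cstar u ^ Suc i * u ^ Suc i = cstar u ^ i * (cstar u * u) * u ^ i"
    by (simp only: power_Suc2[of "cstar u"] power_Suc[of u] mult.assoc)
  then show ?case using Suc by simp
qed simp

lemma power_mult_cstar_power: "u * cstar u = 1 \<Longrightarrow> u ^ i * cstar u ^ i = (1::'a::cstar_algebra)"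
  using cstar_power_mult_power[of "cstar u" i] by (simp add: cstar_cstar)

lemma isometry_mult:
  assumes "isometry s" "isometry t"
  shows "isometry (s * t)"
proof -
  have "cstar (s * t) * (s * t) = cstar t * (cstar s * s) * t" by (simp add: cstar_mult mult.assoc)
  then show ?thesis using assms by (simp add: isometry_def)
qed

lemma isometries_eq_if_cstar_mult_eq_one:
  fixes x y :: "'a::cstar_algebra"
  assumes "isometry x" "isometry y" "cstar x * y = 1"
  shows "x = y"
proof -
  have "cstar y * x = 1" using arg_cong[OF assms(3), of cstar] by (simp add: cstar_mult cstar_cstar cstar_one)
  then have "cstar (x - y) * (x - y) = 0"
    using assms by (simp add: isometry_def cstar_diff algebra_simps)
  then show ?thesis using cstar_identity[of "x - y"] by simp
qed

definition twisted_isometry :: "'a::cstar_algebra \<Rightarrow> nat \<Rightarrow> 'a \<Rightarrow> bool" where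
  "twisted_isometry u n s \<longleftrightarrow> isometry s \<and> unitary u \<and> s * u = u ^ n * s \<and>
     (\<Sum>i<n. u ^ i * s * cstar s * cstar u ^ i) = 1"

lemma mult_power_twisted:
  fixes s u :: "'a::cstar_algebra"
  assumes "s * u = u ^ n * s"
  shows "s * u ^ k = u ^ (n * k) * s"
proof (induct k)
  case (Suc k)
  have "s * u ^ Suc k = u ^ n * (s * u ^ k)" using assms by (simp add: mult.assoc[symmetric])
  also have "\<dots> = u ^ (n * Suc k) * s" using Suc by (simp add: mult.assoc power_add)
  finally show ?case .
qed simp

lemma cstar_mult_power_twisted:
  fixes s u :: "'a::cstar_algebra"
  assumes "s * u = u ^ n * s" "unitary u"
  shows "cstar s * u ^ (n * k) = u ^ k * cstar s"
proof -
  have u: "cstar u * u = 1" "u * cstar u = 1" using assms(2) by (simp_all add: unitary_def)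
  have "cstar u ^ (n * k) * s = cstar u ^ (n * k) * (s * u ^ k) * cstar u ^ k"
    using power_mult_cstar_power[OF u(2), of k] by (simp add: mult.assoc)
  also have "\<dots> = s * cstar u ^ k"
    using mult_power_twisted[OF assms(1), of k] cstar_power_mult_power[OF u(1), of "n * k"]
    by (simp add: mult.assoc[symmetric])
  finally have "cstar (cstar u ^ (n * k) * s) = cstar (s * cstar u ^ k)" by simp
  then show ?thesis by (simp add: cstar_mult cstar_power cstar_cstar)
qed

text \<open>The range projections of \<open>u\<^sup>i s\<close>, \<open>i < n\<close>, sum to \<open>1\<close> and hence are orthogonal.\<close>
lemma cstar_mult_power_mult_eq_0:
  assumes "twisted_isometry u n s" "0 < j" "j < n"
  shows "cstar s * u ^ j * s = 0"
proof -
  have s: "cstar s * s = 1" and u: "cstar u * u = 1"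
    and sum: "(\<Sum>i<n. u ^ i * s * cstar s * cstar u ^ i) = 1"
    using assms(1) by (simp_all add: twisted_isometry_def isometry_def unitary_def)
  define p where "p i = u ^ i * s * cstar s * cstar u ^ i" for i
  have "projection (p i)" for i
  proof -
    have "p i * p i = u ^ i * s * (cstar s * (cstar u ^ i * u ^ i) * s) * cstar s * cstar u ^ i"
      by (simp add: p_def mult.assoc)
    also have "\<dots> = p i" using cstar_power_mult_power[OF u, of i] s by (simp add: p_def)
    moreover have "cstar (p i) = p i" by (simp add: p_def cstar_mult cstar_power cstar_cstar mult.assoc)
    ultimately show ?thesis by (simp add: projection_def)
  qed
  then have "p 0 * p j = 0"
    using projections_sum_one_orthogonal[of "{..<n}" p 0 j] sum assms(2,3) by (simp add: p_def)
  then have "cstar s * (p 0 * p j) * u ^ j * s = 0" by simp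
  moreover have "cstar s * (p 0 * p j) * u ^ j * s
      = (cstar s * s) * cstar s * u ^ j * s * cstar s * (cstar u ^ j * u ^ j) * s"
    by (simp add: p_def mult.assoc)
  ultimately show ?thesis using s cstar_power_mult_power[OF u, of j] by (simp add: mult.assoc)
qed

lemma cstar_mult_power_mult:
  assumes "twisted_isometry u n s" "0 < n"
  shows "cstar s * u ^ j * s = (if n dvd j then u ^ (j div n) else 0)"
proof -
  define q r where "q = j div n" and "r = j mod n"
  have "j = n * q + r" by (simp add: q_def r_def)
  then have "cstar s * u ^ j * s = (cstar s * u ^ (n * q)) * u ^ r * s"
    by (simp add: power_add mult.assoc)
  also have "\<dots> = u ^ q * (cstar s * u ^ r * s)"
    using assms(1) cstar_mult_power_twisted[of s u n q]
    by (simp add: twisted_isometry_def mult.assoc)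
  finally have j: "cstar s * u ^ j * s = u ^ q * (cstar s * u ^ r * s)" .
  show ?thesis
  proof (cases "n dvd j")
    case True
    then show ?thesis
      using j assms(1) by (simp add: q_def r_def twisted_isometry_def isometry_def)
  next
    case False
    then have "0 < r" "r < n" using assms(2) by (auto simp: r_def dvd_eq_mod_eq_0)
    then show ?thesis using j False cstar_mult_power_mult_eq_0[OF assms(1)] by simp
  qed
qed

section \<open>The adjoint product formula\<close>

lemma common_multiples_below_product:
  fixes n m :: nat
  assumes "0 < n" "0 < m"
  shows "{l. l \<le> n * m - 1 \<and> n dvd l \<and> m dvd l} = (\<lambda>i. m * i) ` {i. i < n \<and> n dvd m * i}"
proof (intro set_eqI iffI)
  fix l assume l: "l \<in> {l. l \<le> n * m - 1 \<and> n dvd l \<and> m dvd l}"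
  then obtain i where i: "l = m * i" by blast
  have "0 < n * m" using assms by simp
  then have "m * i < m * n" using l i by (simp add: mult.commute less_Suc_eq_le[symmetric])
  then show "l \<in> (\<lambda>i. m * i) ` {i. i < n \<and> n dvd m * i}" using l i by auto
next
  fix l assume "l \<in> (\<lambda>i. m * i) ` {i. i < n \<and> n dvd m * i}"
  then obtain i where i: "l = m * i" "i < n" "n dvd m * i" by auto
  have "m * i \<le> m * (n - 1)" using i(2) by (intro mult_le_mono2) linarith
  also have "\<dots> \<le> n * m - 1" using assms by (simp add: diff_mult_distrib2 mult.commute)
  finally show "l \<in> {l. l \<le> n * m - 1 \<and> n dvd l \<and> m dvd l}" using i by simp
qed

lemma cstar_mult_eq_sum_if_commute:
  fixes s t u :: "'a::cstar_algebra"
  assumes s: "twisted_isometry u n s" and t: "t * u = u ^ m * t"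
    and pos: "0 < n" "0 < m" and comm: "s * t = t * s"
  shows "cstar s * t = (\<Sum>l\<in>{l. l \<le> n * m - 1 \<and> n dvd l \<and> m dvd l}.
    u ^ (l div n) * t * cstar s * cstar u ^ (l div m))"
proof -
  define g where "g l = u ^ (l div n) * t * cstar s * cstar u ^ (l div m)" for l
  have "cstar s * t = cstar s * t * (\<Sum>i<n. u ^ i * s * cstar s * cstar u ^ i)"
    using s by (simp add: twisted_isometry_def)
  also have "\<dots> = (\<Sum>i<n. if n dvd m * i then g (m * i) else 0)"
  proof (unfold sum_distrib_left, rule sum.cong[OF refl])
    fix i
    have "cstar s * t * (u ^ i * s * cstar s * cstar u ^ i)
        = cstar s * (t * u ^ i) * s * cstar s * cstar u ^ i"
      by (simp add: mult.assoc)
    also have "\<dots> = cstar s * u ^ (m * i) * (t * s) * cstar s * cstar u ^ i"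
      using mult_power_twisted[OF t, of i] by (simp add: mult.assoc)
    also have "\<dots> = (cstar s * u ^ (m * i) * s) * (t * cstar s * cstar u ^ i)"
      by (simp only: comm[symmetric]) (simp add: mult.assoc)
    finally show "cstar s * t * (u ^ i * s * cstar s * cstar u ^ i) = (if n dvd m * i then g (m * i) else 0)"
      using pos by (simp add: cstar_mult_power_mult[OF s pos(1)] g_def mult.assoc[symmetric])
  qed
  also have "\<dots> = (\<Sum>i\<in>{i. i < n \<and> n dvd m * i}. g (m * i))"
    by (simp add: sum.inter_filter[symmetric] lessThan_def conj_commute)
  also have "\<dots> = (\<Sum>l\<in>(\<lambda>i. m * i) ` {i. i < n \<and> n dvd m * i}. g l)"
    using pos by (subst sum.reindex) (auto simp: inj_on_def)
  finally show ?thesis by (simp only: common_multiples_below_product[OF pos] g_def)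
qed

text \<open>Sandwiching the formula between \<open>cstar t\<close> and \<open>s\<close> kills every term with \<open>l \<noteq> 0\<close>, so the
  isometries \<open>s t\<close> and \<open>t s\<close> satisfy \<open>cstar (s t) (t s) = 1\<close>.\<close>
lemma commute_if_cstar_mult_eq_sum:
  fixes s t u :: "'a::cstar_algebra"
  assumes s: "isometry s" and t: "twisted_isometry u m t" and pos: "0 < n" "0 < m"
    and formula: "cstar s * t = (\<Sum>l\<in>{l. l \<le> n * m - 1 \<and> n dvd l \<and> m dvd l}.
      u ^ (l div n) * t * cstar s * cstar u ^ (l div m))"
  shows "s * t = t * s"
proof (rule isometries_eq_if_cstar_mult_eq_one)
  define L where "L = {l. l \<le> n * m - 1 \<and> n dvd l \<and> m dvd l}"
  have "finite L" unfolding L_def by (rule finite_subset[of _ "{..n * m}"]) auto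
  have t_iso: "cstar t * t = 1" and s_iso: "cstar s * s = 1"
    using s t by (simp_all add: twisted_isometry_def isometry_def)
  have summand: "cstar t * (u ^ (l div n) * t * cstar s * cstar u ^ (l div m)) * s = (if l = 0 then 1 else 0)"
    if "l \<in> L" for l
  proof -
    have split: "cstar t * (u ^ (l div n) * t * cstar s * cstar u ^ (l div m)) * s
        = (cstar t * u ^ (l div n) * t) * (cstar s * cstar u ^ (l div m) * s)"
      by (simp add: mult.assoc)
    show ?thesis
    proof (cases "l = 0")
      case False
      from that obtain a where a: "l = n * a" "n * a \<le> n * m - 1" by (auto simp: L_def)
      then have "0 < a" "a < m" using False pos by (auto simp: less_Suc_eq_le[symmetric])
      then have "cstar t * u ^ a * t = 0" using cstar_mult_power_mult_eq_0[OF t] by blast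
      then show ?thesis using split a False pos by simp
    qed (simp add: mult.assoc[symmetric] t_iso s_iso)
  qed
  have "cstar (s * t) * (t * s) = cstar t * (cstar s * t) * s"
    by (simp add: cstar_mult mult.assoc)
  also have "\<dots> = (\<Sum>l\<in>L. cstar t * (u ^ (l div n) * t * cstar s * cstar u ^ (l div m)) * s)"
    unfolding formula L_def by (simp add: sum_distrib_left sum_distrib_right)
  also have "\<dots> = (\<Sum>l\<in>L. if l = 0 then 1 else 0)" using summand by (rule sum.cong[OF refl])
  also have "\<dots> = 1" using \<open>finite L\<close> by (simp add: L_def)
  finally show "cstar (s * t) * (t * s) = 1" .
  show "isometry (s * t)" "isometry (t * s)"
    using s t isometry_mult by (auto simp: twisted_isometry_def)
qed

theorem proposition4p7:
  fixes S :: "nat set" and Sf :: "nat \<Rightarrow> 'a::cstar_algebra" and U :: 'a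
  assumes "S \<noteq> {}"
    and "S \<subseteq> {n. 0 < n \<and> n \<noteq> 1}"
    and "\<forall>n\<in>S. isometry (Sf n)"
    and "unitary U"
    and "cstar_generated_by (insert U (Sf ` S))"
    and "\<forall>n\<in>S. Sf n * U = U ^ n * Sf n"
    and "\<forall>n\<in>S. (\<Sum>i<n. U ^ i * Sf n * cstar (Sf n) * cstar U ^ i) = 1"
  shows "(\<forall>n\<in>S. \<forall>m\<in>S. Sf n * Sf m = Sf m * Sf n) \<longleftrightarrow>
    (\<forall>n\<in>S. \<forall>m\<in>S. cstar (Sf n) * Sf m =
       (\<Sum>l\<in>{l. l \<le> n * m - 1 \<and> n dvd l \<and> m dvd l}.
          U ^ (l div n) * Sf m * cstar (Sf n) * cstar U ^ (l div m)))"
proof -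
  have twisted: "twisted_isometry U n (Sf n)" and pos: "0 < n" if "n \<in> S" for n
    using assms that by (auto simp: twisted_isometry_def)
  show ?thesis
  proof (intro iffI ballI)
    fix n m assume comm: "\<forall>n\<in>S. \<forall>m\<in>S. Sf n * Sf m = Sf m * Sf n" and n: "n \<in> S" and m: "m \<in> S"
    show "cstar (Sf n) * Sf m = (\<Sum>l\<in>{l. l \<le> n * m - 1 \<and> n dvd l \<and> m dvd l}.
        U ^ (l div n) * Sf m * cstar (Sf n) * cstar U ^ (l div m))"
      by (rule cstar_mult_eq_sum_if_commute[OF twisted[OF n] _ pos[OF n] pos[OF m]])
        (use assms(6) comm n m in simp_all)
  next
    fix n m assume formula: "\<forall>n\<in>S. \<forall>m\<in>S. cstar (Sf n) * Sf m =
      (\<Sum>l\<in>{l. l \<le> n * m - 1 \<and> n dvd l \<and> m dvd l}.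
        U ^ (l div n) * Sf m * cstar (Sf n) * cstar U ^ (l div m))" and n: "n \<in> S" and m: "m \<in> S"
    show "Sf n * Sf m = Sf m * Sf n"
      by (rule commute_if_cstar_mult_eq_sum[OF _ twisted[OF m] pos[OF n] pos[OF m]])
        (use assms(3) formula n m in simp_all)
  qed
qed

end
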